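(* Let $p,q,r,s$ be arbitrary integers and put $$x_1=pq(r^2-s^2)+q^2r^2,\quad x_2=-(p^2s(r+s)-q^2rs),\quad x_3=p^2r(r+s)+pqr^2-q^2rs,$$ $$x_4=-(p^2r(r+s)+pq(r^2-s^2)),\quad x_5=p^2s(r+s)-pqr^2-q^2r^2.$$ Let $$B=\begin{bmatrix} x_2 & -x_3 & 1\\ -x_4 & x_5 & 1\\ 1 & 1 & 0\end{bmatrix}.$$ Then $\det B = x_1$ and $\det(B^{(3)}) = x_1^3$.
   Context: For a matrix $M=(m_{ij})$, $M^{(3)}$ denotes the matrix $(m_{ij}^3)$ obtained by replacing each entry by its cube. *)

theory Defs
  imports "HOL-Analysis.Analysis"
begin

definition entrywise_cube :: "'a::power ^'n^'m \<Rightarrow> 'a^'n^'m" where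
  "entrywise_cube M = (\<chi> i j. (M $ i $ j) ^ 3)"

definition mat3 :: "'a::zero \<Rightarrow> 'a \<Rightarrow> 'a \<Rightarrow> 'a \<Rightarrow> 'a \<Rightarrow> 'a \<Rightarrow> 'a \<Rightarrow> 'a \<Rightarrow> 'a \<Rightarrow> 'a^3^3" where
  "mat3 a11 a12 a13 a21 a22 a23 a31 a32 a33 =
     vector [vector [a11, a12, a13], vector [a21, a22, a23], vector [a31, a32, a33]]"

end

theory Submission
  imports Defs
begin

text \<open>Bordering a 2x2 block [[a, b], [c, d]] by ones with a zero corner makes the determinant
  the linear form b + c - a - d, and entrywise cubing keeps the border. For B both claims
  therefore reduce to the polynomial identities x2 + x3 + x4 + x5 = -x1 and
  x2^3 + x3^3 + x4^3 + x5^3 = -x1^3.\<close>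

lemma det_mat3:
  "det (mat3 a b c d e f g h i :: 'a::comm_ring_1^3^3) =
     a*e*i - a*f*h - b*d*i + b*f*g + c*d*h - c*e*g"
  unfolding mat3_def det_3 by (simp add: vector_3 algebra_simps)

lemma entrywise_cube_mat3:
  "entrywise_cube (mat3 a b c d e f g h i :: 'a::comm_ring_1^3^3) =
     mat3 (a^3) (b^3) (c^3) (d^3) (e^3) (f^3) (g^3) (h^3) (i^3)"
  unfolding entrywise_cube_def mat3_def by (simp add: vec_eq_iff forall_3 vector_3)

lemma det_mat3_bordered:
  "det (mat3 a b 1 c d 1 1 1 0 :: 'a::comm_ring_1^3^3) = b + c - a - d"
  by (simp add: det_mat3)

lemma det_entrywise_cube_mat3_bordered:
  "det (entrywise_cube (mat3 a b 1 c d 1 1 1 0 :: 'a::comm_ring_1^3^3)) =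
     b^3 + c^3 - a^3 - d^3"
  unfolding entrywise_cube_mat3 by (simp add: det_mat3_bordered)

theorem mainTheorem3:
  fixes p q r s x1 x2 x3 x4 x5 :: int and B :: "int^3^3"
  assumes "x1 = p * q * (r ^ 2 - s ^ 2) + q ^ 2 * r ^ 2"
      and "x2 = - (p ^ 2 * s * (r + s) - q ^ 2 * r * s)"
      and "x3 = p ^ 2 * r * (r + s) + p * q * r ^ 2 - q ^ 2 * r * s"
      and "x4 = - (p ^ 2 * r * (r + s) + p * q * (r ^ 2 - s ^ 2))"
      and "x5 = p ^ 2 * s * (r + s) - p * q * r ^ 2 - q ^ 2 * r ^ 2"
      and "B = mat3 x2 (- x3) 1 (- x4) x5 1 1 1 0"
  shows "det B = x1 \<and> det (entrywise_cube B) = x1 ^ 3"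
proof -
  have linear: "x2 + x3 + x4 + x5 = - x1"
    unfolding assms(1-5) by algebra
  have cubic: "x2 ^ 3 + x3 ^ 3 + x4 ^ 3 + x5 ^ 3 = - (x1 ^ 3)"
    unfolding assms(1-5) by algebra
  have "det B = - (x2 + x3 + x4 + x5)"
    using assms(6) by (simp add: det_mat3_bordered)
  moreover have "det (entrywise_cube B) = - (x2 ^ 3 + x3 ^ 3 + x4 ^ 3 + x5 ^ 3)"
    using assms(6) by (simp add: det_entrywise_cube_mat3_bordered)
  ultimately show ?thesis using linear cubic by simp
qed

end
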